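(* Let $(X,\Sigma,\mu)$ be a measure space, $n\ge1$, $\mathbb{F}\in\{\mathbb{R},\mathbb{C}\}$, $h\in L^2(X,\mu;\mathbb{F})$, and define $T:L^2(X,\mu;\mathbb{F}^n)\to\mathbb{F}^n$ by $T(F)=\int_X h(x)f_x\,d\mu(x)$ for $F=(f_x)_{x\in X}$. Suppose there is a measurable subset $Y\subseteq X$ such that $\dim L^2(Y,\mu;\mathbb{F})\ge n$ and $\mu\big((X\setminus Y)\cap h^{-1}(\mathbb{F}\setminus\{0\})\big)>0$. Then for every $d\in\mathbb{F}^n$, $T^{-1}(\{d\})$ contains a continuous frame $\Phi\in\mathcal{F}^{\mathbb{F}}_{(X,\mu),n}$.
   Context: A family $\Phi=(\varphi_x)_{x\in X}$ in $\mathbb{F}^n$ (with measurable coordinates) is a continuous frame indexed by $(X,\mu)$ if there are $0<A\le B$ with $A\|v\|^2\le\int_X|\langle v,\varphi_x\rangle|^2d\mu(x)\le B\|v\|^2$ for all $v\in\mathbb{F}^n$. $\mathcal{F}^{\mathbb{F}}_{(X,\mu),n}$ denotes the set of such frames, viewed as a subset of $L^2(X,\mu;\mathbb{F}^n)$. $L^2(Y,\mu;\mathbb{F})$ is the $L^2$ space of the restriction of $\mu$ to $Y$. *)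

theory Defs
  imports "HOL-Analysis.Analysis"
begin

definition L2 :: "'b measure \<Rightarrow> ('b \<Rightarrow> 'v::{banach,second_countable_topology}) set" where
  "L2 M = {f. f \<in> borel_measurable M \<and> integrable M (\<lambda>x. (norm (f x))\<^sup>2)}"

text \<open>dim L2(N; F) >= n, F given by the type 'a: there are n elements of L2(N;F)
  whose classes modulo a.e.-equality are linearly independent over F.\<close>
definition L2_dim_at_least ::
  "'a::{real_normed_field,banach,second_countable_topology} itself \<Rightarrow> 'b measure \<Rightarrow> nat \<Rightarrow> bool" where
  "L2_dim_at_least _ N n \<longleftrightarrow>
     (\<exists>f :: nat \<Rightarrow> 'b \<Rightarrow> 'a. (\<forall>i<n. f i \<in> L2 N) \<and>
        (\<forall>c :: nat \<Rightarrow> 'a. (AE x in N. (\<Sum>i<n. c i * f i x) = 0) \<longrightarrow> (\<forall>i<n. c i = 0)))"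

definition rinner :: "real^'n \<Rightarrow> real^'n \<Rightarrow> real" where
  "rinner v w = (\<Sum>i\<in>UNIV. v $ i * w $ i)"

definition cinner :: "complex^'n \<Rightarrow> complex^'n \<Rightarrow> complex" where
  "cinner v w = (\<Sum>i\<in>UNIV. v $ i * cnj (w $ i))"

definition cont_frame_real :: "'b measure \<Rightarrow> ('b \<Rightarrow> real^'n) \<Rightarrow> bool" where
  "cont_frame_real M \<Phi> \<longleftrightarrow> \<Phi> \<in> borel_measurable M \<and>
     (\<exists>A B. 0 < A \<and> A \<le> B \<and>
       (\<forall>v::real^'n.
          ennreal (A * (norm v)\<^sup>2) \<le> (\<integral>\<^sup>+x. ennreal ((\<bar>rinner v (\<Phi> x)\<bar>)\<^sup>2) \<partial>M) \<and>
          (\<integral>\<^sup>+x. ennreal ((\<bar>rinner v (\<Phi> x)\<bar>)\<^sup>2) \<partial>M) \<le> ennreal (B * (norm v)\<^sup>2)))"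

definition cont_frame_complex :: "'b measure \<Rightarrow> ('b \<Rightarrow> complex^'n) \<Rightarrow> bool" where
  "cont_frame_complex M \<Phi> \<longleftrightarrow> \<Phi> \<in> borel_measurable M \<and>
     (\<exists>A B. 0 < A \<and> A \<le> B \<and>
       (\<forall>v::complex^'n.
          ennreal (A * (norm v)\<^sup>2) \<le> (\<integral>\<^sup>+x. ennreal ((cmod (cinner v (\<Phi> x)))\<^sup>2) \<partial>M) \<and>
          (\<integral>\<^sup>+x. ennreal ((cmod (cinner v (\<Phi> x)))\<^sup>2) \<partial>M) \<le> ennreal (B * (norm v)\<^sup>2)))"

end

theory Submission
  imports Defs
begin

text \<open>
  Take \<open>n\<close> functions on \<open>Y\<close> that are linearly independent modulo null functions and let \<open>\<Psi>\<close> be the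
  vector they form, extended by zero. On \<open>Z = (X - Y) \<inter> {h \<noteq> 0}\<close> put the weight \<open>m = conj h\<close>: then
  \<open>\<integral> h m = \<integral>\<^sub>Z |h|\<^sup>2 > 0\<close>, so \<open>\<Phi> = \<Psi> + m c\<close> satisfies \<open>\<integral> h \<Phi> = d\<close> for a suitable constant vector \<open>c\<close>,
  while \<open>\<Phi> = \<Psi>\<close> on \<open>Y\<close>. Every \<open>\<Phi> \<in> L\<^sup>2\<close> has the upper frame bound by Cauchy-Schwarz; the lower
  bound is the minimum of the continuous quadratic form \<open>v \<mapsto> \<integral> |\<langle>v, \<Phi>\<rangle>|\<^sup>2\<close> on the unit sphere,
  which is positive because \<open>\<langle>v, \<Phi>\<rangle> = 0\<close> a.e. forces a linear relation among the components of
  \<open>\<Psi>\<close> on \<open>Y\<close>.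
\<close>

lemma L2_add:
  fixes f g :: "'b \<Rightarrow> 'v::{banach,second_countable_topology}"
  assumes "f \<in> L2 M" "g \<in> L2 M"
  shows "(\<lambda>x. f x + g x) \<in> L2 M"
proof -
  have bound: "(norm (a + b))\<^sup>2 \<le> 2 * (norm a)\<^sup>2 + 2 * (norm b)\<^sup>2" for a b :: 'v
  proof -
    have "(norm (a + b))\<^sup>2 \<le> (norm a + norm b)\<^sup>2"
      by (rule power_mono[OF norm_triangle_ineq]) simp
    also have "\<dots> \<le> 2 * (norm a)\<^sup>2 + 2 * (norm b)\<^sup>2"
      using sum_squares_bound[of "norm a" "norm b"] by (simp add: power2_sum)
    finally show ?thesis .
  qed
  have "integrable M (\<lambda>x. (norm (f x + g x))\<^sup>2)"
    by (rule Bochner_Integration.integrable_bound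
          [where f="\<lambda>x. 2 * (norm (f x))\<^sup>2 + 2 * (norm (g x))\<^sup>2"])
       (use assms bound in \<open>auto simp: L2_def\<close>)
  then show ?thesis using assms by (simp add: L2_def borel_measurable_add)
qed

lemma integrable_bounded_by_L2_product:
  fixes f :: "'b \<Rightarrow> 'u::{banach,second_countable_topology}"
    and g :: "'b \<Rightarrow> 'v::{banach,second_countable_topology}"
    and F :: "'b \<Rightarrow> 'w::{banach,second_countable_topology}"
  assumes "f \<in> L2 M" "g \<in> L2 M" "F \<in> borel_measurable M"
    and "\<And>x. norm (F x) \<le> norm (f x) * norm (g x)"
  shows "integrable M F"
proof (rule Bochner_Integration.integrable_bound[where f="\<lambda>x. (norm (f x))\<^sup>2 + (norm (g x))\<^sup>2"])
  show "integrable M (\<lambda>x. (norm (f x))\<^sup>2 + (norm (g x))\<^sup>2)"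
    using assms(1,2) by (simp add: L2_def)
  show "AE x in M. norm (F x) \<le> norm ((norm (f x))\<^sup>2 + (norm (g x))\<^sup>2)"
  proof (intro AE_I2)
    fix x
    have "0 \<le> norm (f x) * norm (g x)" by simp
    then have "norm (f x) * norm (g x) \<le> (norm (f x))\<^sup>2 + (norm (g x))\<^sup>2"
      using sum_squares_bound[of "norm (f x)" "norm (g x)"] by linarith
    then show "norm (F x) \<le> norm ((norm (f x))\<^sup>2 + (norm (g x))\<^sup>2)"
      using assms(4)[of x] by simp
  qed
qed (use assms in auto)

lemma borel_measurable_vec_nth[measurable (raw)]:
  fixes f :: "'b \<Rightarrow> 'a::real_normed_vector ^ 'n"
  shows "f \<in> borel_measurable M \<Longrightarrow> (\<lambda>x. f x $ i) \<in> borel_measurable M"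
  using borel_measurable_continuous_on[OF linear_continuous_on[OF bounded_linear_vec_nth]] by blast

lemma borel_measurable_vec_lambda[measurable]:
  fixes F :: "'n::finite \<Rightarrow> 'b \<Rightarrow> 'a::euclidean_space"
  assumes "\<And>i. F i \<in> borel_measurable M"
  shows "(\<lambda>x. \<chi> i. F i x) \<in> borel_measurable M"
  unfolding borel_measurable_euclidean_space[where 'c="'a^'n"]
  using assms by (auto simp: Basis_vec_def inner_axis)

lemma borel_measurable_vector_smult[measurable (raw)]:
  fixes a :: "'b \<Rightarrow> 'a::{real_normed_field,euclidean_space}" and f :: "'b \<Rightarrow> 'a^'n"
  assumes [measurable]: "a \<in> borel_measurable M" "f \<in> borel_measurable M"
  shows "(\<lambda>x. a x *s f x) \<in> borel_measurable M"
  unfolding vector_scalar_mult_def by measurable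

lemma norm_vector_smult: "norm ((a::'a::real_normed_field) *s (v::'a^'n)) = norm a * norm v"
  by (simp add: norm_vec_def norm_mult L2_set_right_distrib)

lemma bounded_linear_vector_smult_const: "bounded_linear (\<lambda>a::'a::real_normed_field. a *s (c::'a^'n))"
proof (rule bounded_linear_intro[where K="norm c"])
  show "(x + y) *s c = x *s c + y *s c" for x y by (rule vector_sadd_rdistrib)
  show "(r *\<^sub>R x) *s c = r *\<^sub>R (x *s c)" for r x by (simp add: vec_eq_iff)
  show "norm (x *s c) \<le> norm x * norm c" for x by (simp add: norm_vector_smult)
qed

lemma L2_vector_smult_const:
  fixes a :: "'b \<Rightarrow> 'a::{real_normed_field,euclidean_space}"
  assumes "a \<in> L2 M"
  shows "(\<lambda>x. a x *s (c::'a^'n)) \<in> L2 M"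
proof -
  have "integrable M (\<lambda>x. (norm (a x))\<^sup>2 * (norm c)\<^sup>2)"
    using assms by (simp add: L2_def)
  moreover have "(\<lambda>x. a x *s c) \<in> borel_measurable M"
    by (rule borel_measurable_vector_smult) (use assms in \<open>simp_all add: L2_def\<close>)
  ultimately show ?thesis
    by (simp add: L2_def norm_vector_smult power_mult_distrib)
qed

lemma L2_restrict_space_extend:
  fixes f :: "'b \<Rightarrow> 'v::{banach,second_countable_topology}"
  assumes Y: "Y \<in> sets M" and f: "f \<in> L2 (restrict_space M Y)"
  shows "(\<lambda>x. indicator Y x *\<^sub>R f x) \<in> L2 M"
proof -
  have Y': "Y \<inter> space M \<in> sets M" using Y by auto
  have "f \<in> borel_measurable (restrict_space M Y)"
    using f by (simp add: L2_def)
  then have "(\<lambda>x. indicator Y x *\<^sub>R f x) \<in> borel_measurable M"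
    by (rule borel_measurable_restrict_space_iff[OF Y', THEN iffD1])
  moreover have "integrable (restrict_space M Y) (\<lambda>x. (norm (f x))\<^sup>2)"
    using f by (simp add: L2_def)
  then have "integrable M (\<lambda>x. indicator Y x *\<^sub>R (norm (f x))\<^sup>2)"
    by (rule integrable_restrict_space[OF Y', THEN iffD1])
  moreover have "indicator Y x *\<^sub>R (norm (f x))\<^sup>2 = (norm (indicator Y x *\<^sub>R f x))\<^sup>2" for x
    by (simp add: indicator_def)
  ultimately show ?thesis by (simp add: L2_def)
qed

lemma L2_vec_lambda:
  fixes F :: "'n::finite \<Rightarrow> 'b \<Rightarrow> 'a::euclidean_space"
  assumes "\<And>i. F i \<in> L2 M"
  shows "(\<lambda>x. \<chi> i. F i x) \<in> L2 M"
proof -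
  have "(norm (\<chi> i. F i x))\<^sup>2 = (\<Sum>i\<in>UNIV. (norm (F i x))\<^sup>2)" for x
    by (simp add: norm_vec_def L2_set_def sum_nonneg)
  then show ?thesis
    using assms borel_measurable_vec_lambda[of F M] by (simp add: L2_def)
qed

lemma exists_L2_perturbation_with_integral:
  fixes h m :: "'b \<Rightarrow> 'a::{real_normed_field,euclidean_space}" and \<Psi> :: "'b \<Rightarrow> 'a^'n"
  assumes h: "h \<in> L2 M" and \<Psi>: "\<Psi> \<in> L2 M" and m: "m \<in> L2 M"
    and nonzero: "(\<integral>x. h x * m x \<partial>M) \<noteq> 0"
  shows "\<exists>c. (\<lambda>x. \<Psi> x + m x *s c) \<in> L2 M \<and> (\<integral>x. h x *s (\<Psi> x + m x *s c) \<partial>M) = d"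
proof -
  define \<alpha> where "\<alpha> = (\<integral>x. h x * m x \<partial>M)"
  define c where "c = inverse \<alpha> *s (d - (\<integral>x. h x *s \<Psi> x \<partial>M))"
  have h\<Psi>: "integrable M (\<lambda>x. h x *s \<Psi> x)"
    by (rule integrable_bounded_by_L2_product[OF h \<Psi>])
       (use h \<Psi> in \<open>auto simp: L2_def norm_vector_smult\<close>)
  have hm: "integrable M (\<lambda>x. h x * m x)"
    by (rule integrable_bounded_by_L2_product[OF h m]) (use h m in \<open>auto simp: L2_def norm_mult\<close>)
  note smult_const = integrable_bounded_linear[OF bounded_linear_vector_smult_const hm]
    integral_bounded_linear[OF bounded_linear_vector_smult_const hm]
  have "(\<integral>x. h x *s (\<Psi> x + m x *s c) \<partial>M) = (\<integral>x. h x *s \<Psi> x + (h x * m x) *s c \<partial>M)"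
    by simp
  also have "\<dots> = (\<integral>x. h x *s \<Psi> x \<partial>M) + \<alpha> *s c"
    unfolding \<alpha>_def by (subst Bochner_Integration.integral_add) (use h\<Psi> smult_const in auto)
  also have "\<dots> = d"
    using nonzero by (simp add: \<alpha>_def c_def vector_smult_assoc)
  finally show ?thesis
    using L2_add[OF \<Psi> L2_vector_smult_const[OF m]] by blast
qed

definition has_frame_bounds ::
  "('v::real_normed_vector \<Rightarrow> 'w \<Rightarrow> 'a::real_normed_vector) \<Rightarrow> 'b measure \<Rightarrow> ('b \<Rightarrow> 'w) \<Rightarrow> bool" where
  "has_frame_bounds P M \<Phi> \<longleftrightarrow>
     (\<exists>A B. 0 < A \<and> A \<le> B \<and>
       (\<forall>v. ennreal (A * (norm v)\<^sup>2) \<le> (\<integral>\<^sup>+x. ennreal ((norm (P v (\<Phi> x)))\<^sup>2) \<partial>M) \<and>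
            (\<integral>\<^sup>+x. ennreal ((norm (P v (\<Phi> x)))\<^sup>2) \<partial>M) \<le> ennreal (B * (norm v)\<^sup>2)))"

lemma homogeneous_quadratic_lower_bound:
  fixes q :: "'v::euclidean_space \<Rightarrow> real"
  assumes cont: "continuous_on (sphere 0 1) q"
    and pos: "\<And>v. v \<noteq> 0 \<Longrightarrow> 0 < q v"
    and hom: "\<And>t v. q (t *\<^sub>R v) = t\<^sup>2 * q v"
  shows "\<exists>A>0. \<forall>v. A * (norm v)\<^sup>2 \<le> q v"
proof -
  obtain u where u: "u \<in> sphere 0 1" and min: "\<And>w. w \<in> sphere 0 1 \<Longrightarrow> q u \<le> q w"
    using continuous_attains_inf[OF compact_sphere _ cont] by auto
  have "q u * (norm v)\<^sup>2 \<le> q v" for v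
  proof (cases "v = 0")
    case True
    then show ?thesis using hom[of 0 v] by simp
  next
    case False
    have "q v = (norm v)\<^sup>2 * q (inverse (norm v) *\<^sub>R v)"
      using hom[of "norm v" "inverse (norm v) *\<^sub>R v"] False by simp
    moreover have "q u \<le> q (inverse (norm v) *\<^sub>R v)"
      using False by (intro min) simp
    ultimately show ?thesis
      by (metis mult.commute mult_left_mono zero_le_power2)
  qed
  moreover have "0 < q u" using u by (intro pos) auto
  ultimately show ?thesis by blast
qed

locale bounded_pairing =
  fixes P :: "'v::euclidean_space \<Rightarrow> 'w::{banach,second_countable_topology} \<Rightarrow> 'a::{banach,second_countable_topology}"
  assumes linear_left: "linear (\<lambda>v. P v u)"
    and norm_le: "norm (P v u) \<le> norm v * norm u"
    and continuous_right: "continuous_on UNIV (P v)"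
begin

lemma square_integrable:
  assumes "\<Phi> \<in> L2 M"
  shows "integrable M (\<lambda>x. (norm (P v (\<Phi> x)))\<^sup>2)"
    and "(\<integral>x. (norm (P v (\<Phi> x)))\<^sup>2 \<partial>M) \<le> (norm v)\<^sup>2 * (\<integral>x. (norm (\<Phi> x))\<^sup>2 \<partial>M)"
proof -
  have bound: "(norm (P v (\<Phi> x)))\<^sup>2 \<le> (norm v)\<^sup>2 * (norm (\<Phi> x))\<^sup>2" for x
    using power_mono[OF norm_le[of v "\<Phi> x"]] by (simp add: power_mult_distrib)
  have meas: "(\<lambda>x. P v (\<Phi> x)) \<in> borel_measurable M"
    using borel_measurable_continuous_on[OF continuous_right] assms by (auto simp: L2_def)
  show int: "integrable M (\<lambda>x. (norm (P v (\<Phi> x)))\<^sup>2)"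
    by (rule Bochner_Integration.integrable_bound[where f="\<lambda>x. (norm v)\<^sup>2 * (norm (\<Phi> x))\<^sup>2"])
       (use assms meas bound in \<open>auto simp: L2_def\<close>)
  have "(\<integral>x. (norm (P v (\<Phi> x)))\<^sup>2 \<partial>M) \<le> (\<integral>x. (norm v)\<^sup>2 * (norm (\<Phi> x))\<^sup>2 \<partial>M)"
    by (rule integral_mono) (use int assms bound in \<open>auto simp: L2_def\<close>)
  then show "(\<integral>x. (norm (P v (\<Phi> x)))\<^sup>2 \<partial>M) \<le> (norm v)\<^sup>2 * (\<integral>x. (norm (\<Phi> x))\<^sup>2 \<partial>M)"
    by simp
qed

lemma square_integral_diff:
  assumes "\<Phi> \<in> L2 M"
  shows "\<bar>(\<integral>x. (norm (P v (\<Phi> x)))\<^sup>2 \<partial>M) - (\<integral>x. (norm (P w (\<Phi> x)))\<^sup>2 \<partial>M)\<bar>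
    \<le> norm (v - w) * (norm v + norm w) * (\<integral>x. (norm (\<Phi> x))\<^sup>2 \<partial>M)"
proof -
  have pointwise: "\<bar>(norm (P v u))\<^sup>2 - (norm (P w u))\<^sup>2\<bar> \<le> norm (v - w) * (norm v + norm w) * (norm u)\<^sup>2"
    for u
  proof -
    have "\<bar>norm (P v u) - norm (P w u)\<bar> \<le> norm (v - w) * norm u"
      using norm_triangle_ineq3[of "P v u" "P w u"] norm_le[of "v - w" u]
      by (simp add: linear_diff[OF linear_left])
    moreover have "norm (P v u) + norm (P w u) \<le> (norm v + norm w) * norm u"
      using norm_le[of v u] norm_le[of w u] by (simp add: distrib_right)
    ultimately have "\<bar>norm (P v u) - norm (P w u)\<bar> * (norm (P v u) + norm (P w u))
        \<le> norm (v - w) * norm u * ((norm v + norm w) * norm u)"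
      by (intro mult_mono) auto
    moreover have "\<bar>(norm (P v u))\<^sup>2 - (norm (P w u))\<^sup>2\<bar>
        = \<bar>norm (P v u) - norm (P w u)\<bar> * (norm (P v u) + norm (P w u))"
      by (simp add: power2_eq_square square_diff_square_factored abs_mult mult.commute)
    ultimately show ?thesis
      by (simp add: power2_eq_square algebra_simps)
  qed
  note int = square_integrable(1)[OF assms]
  have "\<bar>(\<integral>x. (norm (P v (\<Phi> x)))\<^sup>2 \<partial>M) - (\<integral>x. (norm (P w (\<Phi> x)))\<^sup>2 \<partial>M)\<bar>
      \<le> (\<integral>x. \<bar>(norm (P v (\<Phi> x)))\<^sup>2 - (norm (P w (\<Phi> x)))\<^sup>2\<bar> \<partial>M)"
    using integral_abs_bound[of M "\<lambda>x. (norm (P v (\<Phi> x)))\<^sup>2 - (norm (P w (\<Phi> x)))\<^sup>2"] int by simp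
  also have "\<dots> \<le> (\<integral>x. norm (v - w) * (norm v + norm w) * (norm (\<Phi> x))\<^sup>2 \<partial>M)"
    by (rule integral_mono) (use int assms pointwise in \<open>auto simp: L2_def\<close>)
  finally show ?thesis by simp
qed

lemma has_frame_bounds:
  assumes L2: "\<Phi> \<in> L2 M"
    and nondegenerate: "\<And>v. (AE x in M. P v (\<Phi> x) = 0) \<Longrightarrow> v = 0"
  shows "has_frame_bounds P M \<Phi>"
proof -
  define q where "q v = (\<integral>x. (norm (P v (\<Phi> x)))\<^sup>2 \<partial>M)" for v
  define G where "G = (\<integral>x. (norm (\<Phi> x))\<^sup>2 \<partial>M)"
  have G_nonneg: "0 \<le> G"
    unfolding G_def by (rule integral_nonneg_AE) simp
  have "(2 * G)-lipschitz_on (sphere 0 1) q"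
  proof (rule lipschitz_onI)
    fix v w :: 'v
    assume "v \<in> sphere 0 1" "w \<in> sphere 0 1"
    then show "dist (q v) (q w) \<le> 2 * G * dist v w"
      using square_integral_diff[OF L2, of v w]
      by (simp add: q_def G_def dist_norm dist_real_def algebra_simps)
  qed (use G_nonneg in simp)
  then have cont: "continuous_on (sphere 0 1) q"
    by (rule lipschitz_on_continuous_on)
  have pos: "0 < q v" if "v \<noteq> 0" for v
  proof -
    have "q v \<noteq> 0"
    proof
      assume "q v = 0"
      then have "AE x in M. P v (\<Phi> x) = 0"
        using integral_nonneg_eq_0_iff_AE[OF square_integrable(1)[OF L2]] by (simp add: q_def)
      with nondegenerate that show False by blast
    qed
    moreover have "0 \<le> q v" unfolding q_def by (rule integral_nonneg_AE) simp
    ultimately show ?thesis by simp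
  qed
  have hom: "q (t *\<^sub>R v) = t\<^sup>2 * q v" for t v
    by (simp add: q_def linear_scale[OF linear_left] power_mult_distrib)
  obtain A where A: "0 < A" "\<And>v. A * (norm v)\<^sup>2 \<le> q v"
    using homogeneous_quadratic_lower_bound[OF cont pos hom] by blast
  have upper: "q v \<le> max A G * (norm v)\<^sup>2" for v
    using square_integrable(2)[OF L2, of v] mult_right_mono[of G "max A G" "(norm v)\<^sup>2"]
    by (simp add: q_def G_def mult.commute)
  have nn: "(\<integral>\<^sup>+x. ennreal ((norm (P v (\<Phi> x)))\<^sup>2) \<partial>M) = ennreal (q v)" for v
    unfolding q_def by (rule nn_integral_eq_integral[OF square_integrable(1)[OF L2]]) simp
  show ?thesis
    unfolding has_frame_bounds_def nn using A upper
    by (intro exI[of _ A] exI[of _ "max A G"]) (auto intro: ennreal_leI)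
qed

end

lemma bounded_pairing_rinner: "bounded_pairing (rinner :: real^'n \<Rightarrow> _)"
proof (rule bounded_pairing.intro)
  have rinner_inner: "rinner v u = inner v u" for v u :: "real^'n"
    by (simp add: rinner_def inner_vec_def)
  show "linear (\<lambda>v. rinner v u)" for u :: "real^'n"
    unfolding rinner_inner by (rule bounded_linear.linear[OF bounded_linear_inner_left])
  show "norm (rinner v u) \<le> norm v * norm u" for v u :: "real^'n"
    unfolding rinner_inner real_norm_def by (rule Cauchy_Schwarz_ineq2)
  show "continuous_on UNIV (rinner v)" for v :: "real^'n"
    unfolding rinner_inner[abs_def] by (intro continuous_intros)
qed

lemma bounded_pairing_cinner: "bounded_pairing (cinner :: complex^'n \<Rightarrow> _)"
proof (rule bounded_pairing.intro)
  show "linear (\<lambda>v. cinner v u)" for u :: "complex^'n"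
    by (rule linearI) (simp_all add: cinner_def ring_distribs sum.distrib scaleR_sum_right)
  show "norm (cinner v u) \<le> norm v * norm u" for v u :: "complex^'n"
  proof -
    define a where "a = (\<chi> i. cmod (v $ i))"
    define b where "b = (\<chi> i. cmod (u $ i))"
    have "cmod (cinner v u) \<le> (\<Sum>i\<in>UNIV. cmod (v $ i * cnj (u $ i)))"
      unfolding cinner_def by (rule norm_sum)
    also have "\<dots> = inner a b"
      by (simp add: a_def b_def inner_vec_def norm_mult)
    also have "\<dots> \<le> norm a * norm b" by (rule norm_cauchy_schwarz)
    also have "norm a * norm b = norm v * norm u" by (simp add: a_def b_def norm_vec_def)
    finally show ?thesis .
  qed
  show "continuous_on UNIV (cinner v)" for v :: "complex^'n"
    unfolding cinner_def[abs_def] by (intro continuous_intros)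
qed

lemma cont_frame_real_iff: "cont_frame_real M \<Phi> \<longleftrightarrow> \<Phi> \<in> borel_measurable M \<and> has_frame_bounds rinner M \<Phi>"
  unfolding cont_frame_real_def has_frame_bounds_def real_norm_def ..

lemma cont_frame_complex_iff:
  "cont_frame_complex M \<Phi> \<longleftrightarrow> \<Phi> \<in> borel_measurable M \<and> has_frame_bounds cinner M \<Phi>"
  unfolding cont_frame_complex_def has_frame_bounds_def ..

lemma L2_dim_at_least_obtains_vector:
  fixes M :: "'b measure"
  assumes dim: "L2_dim_at_least TYPE('a) (restrict_space M Y) CARD('n)"
    and Y: "Y \<in> sets M"
  obtains \<Psi> :: "'b \<Rightarrow> 'a::{real_normed_field,euclidean_space}^'n" where "\<Psi> \<in> L2 M"
    and "\<And>c. (AE x in M. x \<in> Y \<longrightarrow> (\<Sum>i\<in>UNIV. c $ i * \<Psi> x $ i) = 0) \<Longrightarrow> c = 0"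
proof -
  obtain f :: "nat \<Rightarrow> 'b \<Rightarrow> 'a" where f: "\<And>j. j < CARD('n) \<Longrightarrow> f j \<in> L2 (restrict_space M Y)"
    and indep: "\<And>c. (AE x in restrict_space M Y. (\<Sum>j<CARD('n). c j * f j x) = 0) \<Longrightarrow> \<forall>j<CARD('n). c j = 0"
    using dim unfolding L2_dim_at_least_def by blast
  obtain e :: "'n \<Rightarrow> nat" where e: "bij_betw e UNIV {..<CARD('n)}"
    using ex_bij_betw_finite_nat[of "UNIV::'n set"] by (auto simp: atLeast0LessThan)
  have e_less: "e i < CARD('n)" for i using e by (auto simp: bij_betw_def)
  define \<Psi> where "\<Psi> x = (\<chi> i. indicator Y x *\<^sub>R f (e i) x)" for x
  have "\<Psi> \<in> L2 M"
    unfolding \<Psi>_def by (intro L2_vec_lambda L2_restrict_space_extend Y f e_less)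
  moreover have "c = 0" if ae: "AE x in M. x \<in> Y \<longrightarrow> (\<Sum>i\<in>UNIV. c $ i * \<Psi> x $ i) = 0" for c
  proof -
    define c' where "c' j = c $ inv_into UNIV e j" for j
    have c'_e: "c' (e i) = c $ i" for i
      using e by (simp add: c'_def bij_betw_def)
    have "(\<Sum>i\<in>UNIV. c $ i * \<Psi> x $ i) = (\<Sum>j<CARD('n). c' j * f j x)" if "x \<in> Y" for x
      using that sum.reindex_bij_betw[OF e, of "\<lambda>j. c' j * f j x"] by (simp add: \<Psi>_def c'_e)
    then have "AE x in restrict_space M Y. (\<Sum>j<CARD('n). c' j * f j x) = 0"
      using ae Y by (simp add: AE_restrict_space_iff)
    then show "c = 0"
      using indep e_less by (auto simp: vec_eq_iff simp flip: c'_e)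
  qed
  ultimately show ?thesis using that by blast
qed

lemma L2_indicator_weight:
  fixes h k :: "'b \<Rightarrow> 'a::{real_normed_field,euclidean_space}"
  assumes h: "h \<in> L2 M" and k: "k \<in> borel_measurable M" "\<And>x. norm (k x) = norm (h x)"
    and hk: "\<And>x. h x * k x = of_real ((norm (h x))\<^sup>2)"
    and Z: "Z \<in> sets M" "emeasure M Z > 0" "Z \<subseteq> {x. h x \<noteq> 0}"
  shows "(\<lambda>x. indicator Z x *\<^sub>R k x) \<in> L2 M"
    and "(\<integral>x. h x * (indicator Z x *\<^sub>R k x) \<partial>M) \<noteq> 0"
proof -
  have [measurable]: "Z \<in> sets M" "h \<in> borel_measurable M" "k \<in> borel_measurable M"
    using Z h k by (simp_all add: L2_def)
  have int: "integrable M (\<lambda>x. indicator Z x * (norm (h x))\<^sup>2)"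
    using integrable_mult_indicator[OF Z(1), of "\<lambda>x. (norm (h x))\<^sup>2"] h by (simp add: L2_def)
  have "(norm (indicator Z x *\<^sub>R k x))\<^sup>2 = indicator Z x * (norm (h x))\<^sup>2" for x
    using k(2) by (simp add: indicator_def)
  with int show "(\<lambda>x. indicator Z x *\<^sub>R k x) \<in> L2 M"
    by (simp add: L2_def)
  have "(\<integral>x. indicator Z x * (norm (h x))\<^sup>2 \<partial>M) \<noteq> 0"
  proof
    assume "(\<integral>x. indicator Z x * (norm (h x))\<^sup>2 \<partial>M) = 0"
    then have "AE x in M. indicator Z x * (norm (h x))\<^sup>2 = 0"
      using integral_nonneg_eq_0_iff_AE[OF int] by simp
    then have "AE x in M. x \<notin> Z"
      by eventually_elim (use Z(3) in \<open>auto simp: indicator_def\<close>)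
    then have "emeasure M Z = 0"
      using AE_iff_measurable[OF Z(1), of "\<lambda>x. x \<notin> Z"] sets.sets_into_space[OF Z(1)] by auto
    with Z(2) show False by simp
  qed
  moreover have "(\<lambda>x. h x * (indicator Z x *\<^sub>R k x)) = (\<lambda>x. of_real (indicator Z x * (norm (h x))\<^sup>2))"
    using hk by (simp add: indicator_def fun_eq_iff)
  then have "(\<integral>x. h x * (indicator Z x *\<^sub>R k x) \<partial>M) = of_real (\<integral>x. indicator Z x * (norm (h x))\<^sup>2 \<partial>M)"
    by (simp only: integral_bounded_linear[OF bounded_linear_of_real int])
  ultimately show "(\<integral>x. h x * (indicator Z x *\<^sub>R k x) \<partial>M) \<noteq> 0"
    by simp
qed

lemma exists_frame_with_integral:
  fixes h k :: "'b \<Rightarrow> 'a::{real_normed_field,euclidean_space}" and P :: "'a^'n \<Rightarrow> 'a^'n \<Rightarrow> 'a"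
  assumes P: "bounded_pairing P"
    \<comment> \<open>for \<open>cinner\<close> the coefficients \<open>c\<close> are the conjugates of those of \<open>v\<close>\<close>
    and P_nondegenerate: "\<And>v. v \<noteq> 0 \<Longrightarrow> \<exists>c\<noteq>0. \<forall>w. P v w = 0 \<longrightarrow> (\<Sum>i\<in>UNIV. c $ i * w $ i) = 0"
    and h: "h \<in> L2 M" and Y: "Y \<in> sets M"
    and dim: "L2_dim_at_least TYPE('a) (restrict_space M Y) CARD('n)"
    and pos: "emeasure M ((space M - Y) \<inter> {x \<in> space M. h x \<noteq> 0}) > 0"
    and k: "k \<in> borel_measurable M" "\<And>x. norm (k x) = norm (h x)"
      "\<And>x. h x * k x = of_real ((norm (h x))\<^sup>2)"
  shows "\<exists>\<Phi>. \<Phi> \<in> L2 M \<and> has_frame_bounds P M \<Phi> \<and> (\<integral>x. h x *s \<Phi> x \<partial>M) = d"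
proof -
  obtain \<Psi> :: "'b \<Rightarrow> 'a^'n" where \<Psi>: "\<Psi> \<in> L2 M"
    and indep: "\<And>c. (AE x in M. x \<in> Y \<longrightarrow> (\<Sum>i\<in>UNIV. c $ i * \<Psi> x $ i) = 0) \<Longrightarrow> c = 0"
    using L2_dim_at_least_obtains_vector[OF dim Y] by blast
  define Z where "Z = (space M - Y) \<inter> {x \<in> space M. h x \<noteq> 0}"
  have [measurable]: "h \<in> borel_measurable M" "Y \<in> sets M"
    using h Y by (simp_all add: L2_def)
  have "Z \<in> sets M"
    unfolding Z_def by measurable
  define m where "m = (\<lambda>x. indicator Z x *\<^sub>R k x)"
  have m_off_Y: "m x = 0" if "x \<in> Y" for x
    using that by (simp add: m_def Z_def)
  have "emeasure M Z > 0" "Z \<subseteq> {x. h x \<noteq> 0}"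
    using pos by (auto simp: Z_def)
  then have weight: "m \<in> L2 M" "(\<integral>x. h x * m x \<partial>M) \<noteq> 0"
    using L2_indicator_weight[OF h k \<open>Z \<in> sets M\<close>] by (simp_all add: m_def)
  obtain c where \<Phi>: "(\<lambda>x. \<Psi> x + m x *s c) \<in> L2 M" "(\<integral>x. h x *s (\<Psi> x + m x *s c) \<partial>M) = d"
    using exists_L2_perturbation_with_integral[OF h \<Psi> weight, of d] by (elim exE conjE)
  have nondegenerate: "v = 0" if ae: "AE x in M. P v (\<Psi> x + m x *s c) = 0" for v
  proof (rule ccontr)
    assume "v \<noteq> 0"
    then obtain c' where "c' \<noteq> 0" and c': "\<And>w. P v w = 0 \<Longrightarrow> (\<Sum>i\<in>UNIV. c' $ i * w $ i) = 0"
      using P_nondegenerate by blast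
    have "AE x in M. x \<in> Y \<longrightarrow> (\<Sum>i\<in>UNIV. c' $ i * \<Psi> x $ i) = 0"
      using ae
    proof eventually_elim
      case (elim x)
      show ?case
      proof
        assume "x \<in> Y"
        with elim have "P v (\<Psi> x) = 0" by (simp add: m_off_Y)
        then show "(\<Sum>i\<in>UNIV. c' $ i * \<Psi> x $ i) = 0" by (rule c')
      qed
    qed
    with indep \<open>c' \<noteq> 0\<close> show False by blast
  qed
  have "has_frame_bounds P M (\<lambda>x. \<Psi> x + m x *s c)"
    by (rule bounded_pairing.has_frame_bounds[OF P \<Phi>(1) nondegenerate])
  with \<Phi> show ?thesis by blast
qed

lemma exists_real_frame_with_integral:
  fixes h :: "'b \<Rightarrow> real" and d :: "real^'n"
  assumes h: "h \<in> L2 M" and Y: "Y \<in> sets M"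
    and dim: "L2_dim_at_least TYPE(real) (restrict_space M Y) CARD('n)"
    and pos: "emeasure M ((space M - Y) \<inter> {x \<in> space M. h x \<noteq> 0}) > 0"
  shows "\<exists>\<Phi>. \<Phi> \<in> L2 M \<and> cont_frame_real M \<Phi> \<and> (\<integral>x. h x *s \<Phi> x \<partial>M) = d"
proof -
  have nondegenerate: "\<exists>c\<noteq>0. \<forall>w. rinner v w = 0 \<longrightarrow> (\<Sum>i\<in>UNIV. c $ i * w $ i) = 0"
    if "v \<noteq> 0" for v :: "real^'n"
    using that by (intro exI[of _ v]) (simp add: rinner_def)
  have "h \<in> borel_measurable M" using h by (simp add: L2_def)
  moreover have "h x * h x = of_real ((norm (h x))\<^sup>2)" for x
    by (simp add: power2_eq_square)
  ultimately obtain \<Phi> where "\<Phi> \<in> L2 M" "has_frame_bounds rinner M \<Phi>" "(\<integral>x. h x *s \<Phi> x \<partial>M) = d"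
    using exists_frame_with_integral[OF bounded_pairing_rinner nondegenerate h Y dim pos, of h]
    by blast
  then show ?thesis
    by (auto simp: cont_frame_real_iff L2_def)
qed

lemma exists_complex_frame_with_integral:
  fixes h :: "'b \<Rightarrow> complex" and d :: "complex^'n"
  assumes h: "h \<in> L2 M" and Y: "Y \<in> sets M"
    and dim: "L2_dim_at_least TYPE(complex) (restrict_space M Y) CARD('n)"
    and pos: "emeasure M ((space M - Y) \<inter> {x \<in> space M. h x \<noteq> 0}) > 0"
  shows "\<exists>\<Phi>. \<Phi> \<in> L2 M \<and> cont_frame_complex M \<Phi> \<and> (\<integral>x. h x *s \<Phi> x \<partial>M) = d"
proof -
  have nondegenerate: "\<exists>c\<noteq>0. \<forall>w. cinner v w = 0 \<longrightarrow> (\<Sum>i\<in>UNIV. c $ i * w $ i) = 0"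
    if "v \<noteq> 0" for v :: "complex^'n"
  proof (intro exI[of _ "\<chi> i. cnj (v $ i)"] conjI allI impI)
    show "(\<chi> i. cnj (v $ i)) \<noteq> 0"
      using that by (simp add: vec_eq_iff)
    fix w assume "cinner v w = 0"
    then have "cnj (cinner v w) = 0" by simp
    then show "(\<Sum>i\<in>UNIV. (\<chi> i. cnj (v $ i)) $ i * w $ i) = 0"
      by (simp add: cinner_def)
  qed
  have "h \<in> borel_measurable M" using h by (simp add: L2_def)
  then have "(\<lambda>x. cnj (h x)) \<in> borel_measurable M"
    by (rule borel_measurable_continuous_on[OF continuous_on_cnj[OF continuous_on_id]])
  moreover have "h x * cnj (h x) = of_real ((norm (h x))\<^sup>2)" for x
    by (rule complex_norm_square[symmetric])
  ultimately obtain \<Phi> where "\<Phi> \<in> L2 M" "has_frame_bounds cinner M \<Phi>" "(\<integral>x. h x *s \<Phi> x \<partial>M) = d"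
    using exists_frame_with_integral[OF bounded_pairing_cinner nondegenerate h Y dim pos,
        of "\<lambda>x. cnj (h x)"]
    by auto
  then show ?thesis
    by (auto simp: cont_frame_complex_iff L2_def)
qed

theorem proposition5p7:
  fixes M :: "'b measure"
  shows "(\<forall>(h :: 'b \<Rightarrow> real) Y.
            h \<in> L2 M \<and> Y \<in> sets M \<and>
            L2_dim_at_least TYPE(real) (restrict_space M Y) CARD('n) \<and>
            emeasure M ((space M - Y) \<inter> {x \<in> space M. h x \<noteq> 0}) > 0 \<longrightarrow>
            (\<forall>d :: real^'n. \<exists>\<Phi> :: 'b \<Rightarrow> real^'n.
                \<Phi> \<in> L2 M \<and> cont_frame_real M \<Phi> \<and> (\<integral>x. h x *s \<Phi> x \<partial>M) = d))
       \<and> (\<forall>(h :: 'b \<Rightarrow> complex) Y.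
            h \<in> L2 M \<and> Y \<in> sets M \<and>
            L2_dim_at_least TYPE(complex) (restrict_space M Y) CARD('n) \<and>
            emeasure M ((space M - Y) \<inter> {x \<in> space M. h x \<noteq> 0}) > 0 \<longrightarrow>
            (\<forall>d :: complex^'n. \<exists>\<Phi> :: 'b \<Rightarrow> complex^'n.
                \<Phi> \<in> L2 M \<and> cont_frame_complex M \<Phi> \<and> (\<integral>x. h x *s \<Phi> x \<partial>M) = d))"
  using exists_real_frame_with_integral exists_complex_frame_with_integral by blast

end
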